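(* Let $n\ge2$. An algebra has a strong $n$-cube term if and only if it has a Mal'cev term.
   Context: A Mal'cev term is a ternary term $q$ such that $q(x,x,y)\approx y\approx q(y,x,x)$ holds. For $k\ge0$, $k_{(i)}$ denotes the $i$-th binary digit of $k$ (least significant is $i=0$). For $i<n$ let $\rho_i\colon\{0,\dots,2^n-1\}\to\{0,\dots,2^n-1\}$ map $k$ to the number obtained from $k$ by setting its $i$-th binary digit to $0$. A strong $n$-cube term is a $(2^n-1)$-ary term $q_n$ such that, for each $i<n$, the algebra satisfies the identity $q_n(y_{\rho_i(0)},y_{\rho_i(1)},\dots,y_{\rho_i(2^n-2)})\approx y_{\rho_i(2^n-1)}$ (i.e. $q_n(x_0,\dots,x_{2^n-2})=x_{2^n-1}$ whenever $x_k=x_l$ for all $k,l<2^n$ differing only in the $i$-th binary digit). For $n=2$ these identities are $q_2(x,y,x)\approx y$ and $q_2(x,x,y)\approx y$. *)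

theory Defs
  imports Main
begin

datatype 'f trm = Var nat | Fun 'f "'f trm list"

fun wf_trm :: "('f \<Rightarrow> nat) \<Rightarrow> nat \<Rightarrow> 'f trm \<Rightarrow> bool" where
  "wf_trm ar k (Var i) = (i < k)"
| "wf_trm ar k (Fun f ts) = (length ts = ar f \<and> (\<forall>t\<in>set ts. wf_trm ar k t))"

fun eval_trm :: "('f \<Rightarrow> 'a list \<Rightarrow> 'a) \<Rightarrow> 'f trm \<Rightarrow> (nat \<Rightarrow> 'a) \<Rightarrow> 'a" where
  "eval_trm F (Var i) e = e i"
| "eval_trm F (Fun f ts) e = F f (map (\<lambda>t. eval_trm F t e) ts)"

definition algebra :: "'a set \<Rightarrow> ('f \<Rightarrow> nat) \<Rightarrow> ('f \<Rightarrow> 'a list \<Rightarrow> 'a) \<Rightarrow> bool" where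
  "algebra A ar F \<longleftrightarrow> (\<forall>f xs. length xs = ar f \<and> set xs \<subseteq> A \<longrightarrow> F f xs \<in> A)"

definition has_malcev_term :: "'a set \<Rightarrow> ('f \<Rightarrow> nat) \<Rightarrow> ('f \<Rightarrow> 'a list \<Rightarrow> 'a) \<Rightarrow> bool" where
  "has_malcev_term A ar F \<longleftrightarrow>
     (\<exists>q. wf_trm ar 3 q \<and>
          (\<forall>x\<in>A. \<forall>y\<in>A. eval_trm F q (nth [x, x, y]) = y \<and> eval_trm F q (nth [y, x, x]) = y))"

definition rho :: "nat \<Rightarrow> nat \<Rightarrow> nat" where
  "rho i k = unset_bit i k"

definition has_strong_cube_term ::
  "nat \<Rightarrow> 'a set \<Rightarrow> ('f \<Rightarrow> nat) \<Rightarrow> ('f \<Rightarrow> 'a list \<Rightarrow> 'a) \<Rightarrow> bool" where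
  "has_strong_cube_term n A ar F \<longleftrightarrow>
     (\<exists>q. wf_trm ar (2^n - 1) q \<and>
          (\<forall>i<n. \<forall>y. (\<forall>k<2^n. y k \<in> A) \<longrightarrow>
              eval_trm F q (\<lambda>k. y (rho i k)) = y (rho i (2^n - 1))))"

end

(* A Mal'cev term m yields strong cube terms recursively: q_(n+1) applies m to a copy of q_n on
   the upper half of the variables, a copy of q_n on the lower half, and the middle variable.
   In a direction i below the top, the inner copies already satisfy the i-th identity, so the
   second and third arguments of m agree; in the top direction both halves receive the same
   inputs, so the first two arguments agree.
   Conversely, in the i-th identity of a strong n-cube term exactly the argument positions
   2^n - 1 - 2^i and 2^n - 1 are identified, so q returns y when all arguments are x except
   the one at 2^n - 1 - 2^i. For i = 0 and i = 1 (this needs n >= 2) these are the two Mal'cev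
   identities of p(a, b, c) = q(b, ..., b, a, c), with a at position 2^n - 3 and c at 2^n - 2. *)

theory Submission
  imports Defs
begin

fun subst_trm :: "(nat \<Rightarrow> 'f trm) \<Rightarrow> 'f trm \<Rightarrow> 'f trm" where
  "subst_trm s (Var i) = s i"
| "subst_trm s (Fun f ts) = Fun f (map (subst_trm s) ts)"

lemma eval_subst_trm:
  "eval_trm F (subst_trm s t) e = eval_trm F t (\<lambda>k. eval_trm F (s k) e)"
  by (induction t) (simp_all add: comp_def cong: map_cong)

lemma wf_subst_trm:
  "wf_trm ar m t \<Longrightarrow> (\<And>i. i < m \<Longrightarrow> wf_trm ar m' (s i)) \<Longrightarrow> wf_trm ar m' (subst_trm s t)"
  by (induction t) auto

lemma wf_trm_mono: "wf_trm ar m t \<Longrightarrow> m \<le> m' \<Longrightarrow> wf_trm ar m' t"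
  by (induction t) auto

lemma eval_trm_cong:
  "wf_trm ar m t \<Longrightarrow> (\<And>i. i < m \<Longrightarrow> e i = e' i) \<Longrightarrow> eval_trm F t e = eval_trm F t e'"
  by (induction t) (simp_all cong: map_cong)

lemma eval_trm_closed:
  assumes "algebra A ar F" "wf_trm ar m t" "\<And>i. i < m \<Longrightarrow> e i \<in> A"
  shows "eval_trm F t e \<in> A"
  using assms(2)
proof (induction t)
  case (Fun f ts)
  then have "set (map (\<lambda>t. eval_trm F t e) ts) \<subseteq> A" by auto
  with Fun.prems assms(1) show ?case unfolding algebra_def by auto
qed (use assms(3) in simp)

lemma unset_bit_plus_bit_nat: "unset_bit i (k::nat) + of_bool (bit k i) * 2^i = k"
proof -
  have "int (unset_bit i k) = int k - of_bool (bit k i) * 2^i"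
    by (simp add: of_nat_unset_bit_eq unset_bit_eq bit_of_nat_iff_bit)
  then have "int (unset_bit i k + of_bool (bit k i) * 2^i) = int k"
    by simp
  then show ?thesis by (simp only: of_nat_eq_iff)
qed

lemma unset_bit_le_nat: "unset_bit i (k::nat) \<le> k"
  using unset_bit_plus_bit_nat le_add1 by metis

lemma bit_add_power_nat: "i < j \<Longrightarrow> bit ((k::nat) + 2^j) i = bit k i"
proof -
  assume "i < j"
  have "take_bit j (k + 2^j) = take_bit j k" by (simp add: take_bit_eq_mod)
  then show ?thesis using \<open>i < j\<close> by (metis bit_take_bit_iff)
qed

lemma unset_bit_add_power:
  assumes "i < j" shows "unset_bit i ((k::nat) + 2^j) = unset_bit i k + 2^j"
proof -
  have "bit (k + 2^j) i = bit k i" using assms by (rule bit_add_power_nat)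
  then have "unset_bit i (k + 2^j) + of_bool (bit k i) * 2^i = k + 2^j"
    using unset_bit_plus_bit_nat[of i "k + 2^j"] by simp
  then show ?thesis using unset_bit_plus_bit_nat[of i k] by linarith
qed

lemma unset_bit_less_power: "(k::nat) < 2^j \<Longrightarrow> unset_bit j k = k"
  using unset_bit_plus_bit_nat[of j k] by (simp add: bit_iff_odd)

lemma unset_bit_add_power_self: "(k::nat) < 2^j \<Longrightarrow> unset_bit j (k + 2^j) = k"
  using unset_bit_plus_bit_nat[of j "k + 2^j"] by (simp add: bit_iff_odd div_add_self2)

lemma unset_bit_eq_unset_bit_iff:
  "unset_bit i (k::nat) = unset_bit i l \<longleftrightarrow> k = l \<or> k = flip_bit i l"
  unfolding bit_eq_iff by (auto simp: bit_simps)

lemma flip_bit_power_minus_1: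
  assumes "i < n" shows "flip_bit i (2^n - 1 :: nat) = 2^n - 1 - 2^i"
proof -
  have "bit (2^n - 1 :: nat) i"
    using assms bit_mask_iff[of n i, where 'a=nat] by (simp add: mask_eq_exp_minus_1)
  then show ?thesis
    using unset_bit_plus_bit_nat[of i "2^n - 1"] by (simp add: flip_bit_eq_if)
qed

definition malcev_trm :: "'a set \<Rightarrow> ('f \<Rightarrow> nat) \<Rightarrow> ('f \<Rightarrow> 'a list \<Rightarrow> 'a) \<Rightarrow> 'f trm \<Rightarrow> bool" where
  "malcev_trm A ar F q \<longleftrightarrow> wf_trm ar 3 q \<and>
     (\<forall>x\<in>A. \<forall>y\<in>A. eval_trm F q (nth [x, x, y]) = y \<and> eval_trm F q (nth [y, x, x]) = y)"

definition strong_cube_trm ::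
  "nat \<Rightarrow> 'a set \<Rightarrow> ('f \<Rightarrow> nat) \<Rightarrow> ('f \<Rightarrow> 'a list \<Rightarrow> 'a) \<Rightarrow> 'f trm \<Rightarrow> bool" where
  "strong_cube_trm n A ar F q \<longleftrightarrow> wf_trm ar (2^n - 1) q \<and>
     (\<forall>i<n. \<forall>y. (\<forall>k<2^n. y k \<in> A) \<longrightarrow> eval_trm F q (\<lambda>k. y (rho i k)) = y (rho i (2^n - 1)))"

lemma has_malcev_term_iff: "has_malcev_term A ar F \<longleftrightarrow> (\<exists>q. malcev_trm A ar F q)"
  unfolding has_malcev_term_def malcev_trm_def ..

lemma has_strong_cube_term_iff:
  "has_strong_cube_term n A ar F \<longleftrightarrow> (\<exists>q. strong_cube_trm n A ar F q)"
  unfolding has_strong_cube_term_def strong_cube_trm_def ..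

(* cube_trm m d is the strong (d+1)-cube term q_(d+1) obtained from the Mal'cev term m by
   q_1(x_0) = x_0 and, with H = 2^n,
   q_(n+1)(x_0, ..., x_(2H-2)) = m(q_n(x_H, ..., x_(2H-2)), q_n(x_0, ..., x_(H-2)), x_(H-1)). *)
primrec cube_trm :: "'f trm \<Rightarrow> nat \<Rightarrow> 'f trm" where
  "cube_trm m 0 = Var 0"
| "cube_trm m (Suc d) = subst_trm
     (nth [subst_trm (\<lambda>k. Var (k + 2^Suc d)) (cube_trm m d), cube_trm m d, Var (2^Suc d - 1)]) m"

lemma wf_cube_trm:
  assumes "wf_trm ar 3 m" shows "wf_trm ar (2^Suc d - 1) (cube_trm m d)"
proof (induction d)
  case (Suc d)
  let ?H = "2^Suc d :: nat"
  have "wf_trm ar (2 * ?H - 1) (subst_trm (\<lambda>k. Var (k + ?H)) (cube_trm m d))"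
    by (rule wf_subst_trm[OF Suc.IH]) auto
  moreover have "wf_trm ar (2 * ?H - 1) (cube_trm m d)"
    by (rule wf_trm_mono[OF Suc.IH]) auto
  moreover have "?H - 1 < 2 * ?H - 1"
    using one_le_power[of "2::nat" "Suc d"] by linarith
  ultimately show ?case
    by (auto intro!: wf_subst_trm[OF assms] simp: less_Suc_eq numeral_3_eq_3)
qed simp

lemma eval_cube_trm_Suc:
  assumes "wf_trm ar 3 m"
  shows "eval_trm F (cube_trm m (Suc d)) e = eval_trm F m (nth
    [eval_trm F (cube_trm m d) (\<lambda>k. e (k + 2^Suc d)), eval_trm F (cube_trm m d) e, e (2^Suc d - 1)])"
  unfolding cube_trm.simps eval_subst_trm
  by (rule eval_trm_cong[OF assms]) (auto simp: eval_subst_trm less_Suc_eq numeral_3_eq_3)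

lemma eval_cube_trm:
  assumes alg: "algebra A ar F" and m: "malcev_trm A ar F m"
  shows "i \<le> d \<Longrightarrow> (\<forall>k<2^Suc d. y k \<in> A) \<Longrightarrow>
    eval_trm F (cube_trm m d) (\<lambda>k. y (rho i k)) = y (rho i (2^Suc d - 1))"
proof (induction d arbitrary: i y)
  case 0
  then show ?case by (simp add: rho_def unset_bit_0)
next
  case (Suc d)
  define H :: nat where "H = 2^Suc d"
  have H: "2^Suc (Suc d) = 2 * H" "2 * H - 1 = (H - 1) + H" "H - 1 < H" "H \<ge> 2"
    using one_le_power[of "2::nat" d] unfolding H_def by auto
  have wf_m: "wf_trm ar 3 m" and
    mal: "\<And>x y. x \<in> A \<Longrightarrow> y \<in> A \<Longrightarrow> eval_trm F m (nth [x, x, y]) = y \<and> eval_trm F m (nth [y, x, x]) = y"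
    using m unfolding malcev_trm_def by auto
  have y_A: "y (rho j k) \<in> A" if "k < 2 * H" for j k
    using Suc.prems(2) unset_bit_le_nat[of j k] that H(1) unfolding rho_def by simp
  let ?a = "eval_trm F (cube_trm m d) (\<lambda>k. y (rho i (k + H)))"
  let ?b = "eval_trm F (cube_trm m d) (\<lambda>k. y (rho i k))"
  let ?c = "y (rho i (H - 1))"
  have eval_Suc: "eval_trm F (cube_trm m (Suc d)) (\<lambda>k. y (rho i k)) = eval_trm F m (nth [?a, ?b, ?c])"
    unfolding H_def by (rule eval_cube_trm_Suc[OF wf_m])
  show ?case
  proof (cases "i \<le> d")
    case True
    have shift: "rho i (k + H) = rho i k + H" for k
      unfolding rho_def H_def using True by (intro unset_bit_add_power) simp
    have "?a = y (rho i (H - 1) + H)"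
      unfolding shift using Suc.IH[OF True, of "\<lambda>k. y (k + H)"] Suc.prems(2) H(1)
      unfolding H_def by simp
    also have "\<dots> = y (rho i (2^Suc (Suc d) - 1))"
      unfolding H(1,2) shift ..
    finally have a: "?a = y (rho i (2^Suc (Suc d) - 1))" .
    have "?b = ?c"
      using Suc.IH[OF True, of y] Suc.prems(2) H(1) unfolding H_def by simp
    moreover have "?c \<in> A" "y (rho i (2^Suc (Suc d) - 1)) \<in> A"
      using y_A H by simp_all
    ultimately show ?thesis
      unfolding eval_Suc a using mal by simp
  next
    case False
    then have i: "i = Suc d" using Suc.prems(1) by simp
    have low: "rho i k = k" if "k < H" for k
      using that unfolding rho_def i H_def by (rule unset_bit_less_power)
    have high: "rho i (k + H) = k" if "k < H" for k
      using that unfolding rho_def i H_def by (rule unset_bit_add_power_self)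
    have wf_cube: "wf_trm ar (H - 1) (cube_trm m d)"
      using wf_cube_trm[OF wf_m] unfolding H_def .
    have a: "?a = eval_trm F (cube_trm m d) y" and b: "?b = eval_trm F (cube_trm m d) y"
      by (auto intro: eval_trm_cong[OF wf_cube] simp: low high)
    have b_A: "eval_trm F (cube_trm m d) y \<in> A"
      by (rule eval_trm_closed[OF alg wf_cube]) (use Suc.prems(2) H(1) in simp)
    have c: "?c = y (H - 1)" "y (H - 1) \<in> A"
      using low[of "H - 1"] y_A[of "H - 1" i] H by simp_all
    have top: "rho i (2 * H - 1) = H - 1"
      using high[of "H - 1"] H(2,3) by simp
    show ?thesis
      unfolding eval_Suc H(1) top a b c(1) using mal[OF b_A c(2)] by simp
  qed
qed

lemma strong_cube_trm_cube_trm: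
  assumes "algebra A ar F" "malcev_trm A ar F m"
  shows "strong_cube_trm (Suc d) A ar F (cube_trm m d)"
  using wf_cube_trm eval_cube_trm[OF assms] assms(2)
  unfolding strong_cube_trm_def malcev_trm_def by (auto simp: less_Suc_eq_le)

lemma eval_strong_cube_trm_deviation:
  assumes q: "strong_cube_trm n A ar F q" and i: "i < n" and "x \<in> A" "y \<in> A"
  shows "eval_trm F q (\<lambda>k. if k = 2^n - 1 - 2^i then y else x) = y"
proof -
  define z where "z k = (if k = rho i (2^n - 1) then y else x)" for k
  have wf_q: "wf_trm ar (2^n - 1) q"
    using q unfolding strong_cube_trm_def by simp
  have "\<forall>k<2^n. z k \<in> A"
    using \<open>x \<in> A\<close> \<open>y \<in> A\<close> by (simp add: z_def)
  then have cube: "eval_trm F q (\<lambda>k. z (rho i k)) = z (rho i (2^n - 1))"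
    using q i unfolding strong_cube_trm_def by blast
  have "z (rho i k) = (if k = 2^n - 1 - 2^i then y else x)" if "k < 2^n - 1" for k
    using that unset_bit_eq_unset_bit_iff flip_bit_power_minus_1[OF i]
    unfolding z_def rho_def by auto
  then have "eval_trm F q (\<lambda>k. if k = 2^n - 1 - 2^i then y else x) = eval_trm F q (\<lambda>k. z (rho i k))"
    by (intro eval_trm_cong[OF wf_q]) simp
  also have "\<dots> = y"
    unfolding cube by (simp add: z_def)
  finally show ?thesis .
qed

lemma malcev_trm_of_strong_cube_trm:
  fixes q :: "'f trm"
  assumes n: "2 \<le> n" and q: "strong_cube_trm n A ar F q"
  shows "malcev_trm A ar F
    (subst_trm (\<lambda>k. if k = 2^n - 2 then Var 2 else if k = 2^n - 3 then Var 0 else Var 1) q)"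
proof -
  have "(2::nat)^2 \<le> 2^n" using n by (rule power_increasing) simp
  then have N: "2^n - 1 - 2^0 = (2^n - 2 :: nat)" "2^n - 1 - 2^1 = (2^n - 3 :: nat)"
    "(2^n - 2 :: nat) \<noteq> 2^n - 3"
    by simp_all
  define \<sigma> :: "nat \<Rightarrow> 'f trm" where
    "\<sigma> = (\<lambda>k. if k = 2^n - 2 then Var 2 else if k = 2^n - 3 then Var 0 else Var 1)"
  have xxy: "(\<lambda>k. eval_trm F (\<sigma> k) (nth [x, x, y])) = (\<lambda>k. if k = 2^n - 2 then y else x)"
    and yxx: "(\<lambda>k. eval_trm F (\<sigma> k) (nth [y, x, x])) = (\<lambda>k. if k = 2^n - 3 then y else x)"
    for x y :: 'a
    using N(3) by (auto simp: \<sigma>_def)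
  have "wf_trm ar (2^n - 1) q"
    using q unfolding strong_cube_trm_def by simp
  then have "malcev_trm A ar F (subst_trm \<sigma> q)"
    using eval_strong_cube_trm_deviation[OF q, of 0] eval_strong_cube_trm_deviation[OF q, of 1] n
    unfolding malcev_trm_def eval_subst_trm xxy yxx N(1,2)
    by (auto intro!: wf_subst_trm simp: \<sigma>_def)
  then show ?thesis
    unfolding \<sigma>_def .
qed

theorem mainTheorem8:
  fixes n :: nat and A :: "'a set" and ar :: "'f \<Rightarrow> nat" and F :: "'f \<Rightarrow> 'a list \<Rightarrow> 'a"
  assumes "n \<ge> 2" and "algebra A ar F"
  shows "has_strong_cube_term n A ar F \<longleftrightarrow> has_malcev_term A ar F"
proof
  assume "has_strong_cube_term n A ar F"
  then show "has_malcev_term A ar F"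
    using malcev_trm_of_strong_cube_trm[OF assms(1)]
    unfolding has_strong_cube_term_iff has_malcev_term_iff by blast
next
  assume "has_malcev_term A ar F"
  moreover obtain d where "n = Suc d"
    using assms(1) by (cases n) auto
  ultimately show "has_strong_cube_term n A ar F"
    using strong_cube_trm_cube_trm[OF assms(2)]
    unfolding has_strong_cube_term_iff has_malcev_term_iff by blast
qed

end
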